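(* For any direct signaling scheme $\pi$, the expected regret incurred by the procedure CheckPersu$(\pi)$ is at most $$\frac{U(\pi^* )}{\sum_{i\in[m]}\lambda(i)\pi(i)}-\mathbf{1}[\pi\text{ is persuasive}].$$
   Context: Model: state space $[m]$, common prior $\lambda\in\Delta([m])$, user actions $\{0,1\}$, user utility $\rho$; $\omega(i)=(\rho(i,1)-\rho(i,0))\lambda(i)$, with standing assumptions that some $\omega(i)>0$ and $\sum_i\omega(i)<0$. In each round the platform commits to a signaling scheme, a state $\theta_t\sim\lambda$ (independent across rounds) and a signal are drawn, the user forms the Bayesian posterior and takes action 1 iff its posterior expected utility is at least that of action 0, and the platform gets utility equal to the action. $U(\pi)$ is the platform's expected one-round utility under $\pi$. A direct signaling scheme has signals $\{0,1\}$, sending signal 1 in state $i$ w.p. $\pi(i)$; it is persuasive if the user takes action 1 whenever signal 1 is realized. $\pi^*$ is an optimal solution of $\max_{\pi\in[0,1]^m}\sum_i\lambda(i)\pi(i)$ s.t. $\sum_i\omega(i)\pi(i)\ge0$ (the optimal scheme in hindsight). Procedure CheckPersu$(\pi)$: in each successive round commit to $\pi$; if $\sigma_t=1,a_t=1$ return True; if $\sigma_t=1,a_t=0$ return False; if $\sigma_t=0,a_t=1$ return False; else continue to the next round. The regret incurred by the procedure is the expected sum, over the rounds it uses, of $U(\pi^* )-U(\pi)$. *)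

theory Defs
  imports "HOL-Probability.Probability"
begin

(* States are 0..<m; the prior lambda is a pmf supported on {..<m}.
   User utility rho i a for state i and action a in {0,1}.
   A direct signaling scheme is sch :: nat => real, sch i = P(signal 1 | state i).
   Signals are booleans (True = signal 1); user actions are booleans (True = action 1). *)

definition omega :: "nat pmf \<Rightarrow> (nat \<Rightarrow> nat \<Rightarrow> real) \<Rightarrow> nat \<Rightarrow> real" where
  "omega lam rho i = (rho i 1 - rho i 0) * pmf lam i"

definition lik :: "(nat \<Rightarrow> real) \<Rightarrow> bool \<Rightarrow> nat \<Rightarrow> real" where
  "lik sch s i = (if s then sch i else 1 - sch i)"

definition sig_prob :: "nat \<Rightarrow> nat pmf \<Rightarrow> (nat \<Rightarrow> real) \<Rightarrow> bool \<Rightarrow> real" where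
  "sig_prob m lam sch s = (\<Sum>i<m. pmf lam i * lik sch s i)"

definition posterior :: "nat \<Rightarrow> nat pmf \<Rightarrow> (nat \<Rightarrow> real) \<Rightarrow> bool \<Rightarrow> nat \<Rightarrow> real" where
  "posterior m lam sch s i = pmf lam i * lik sch s i / sig_prob m lam sch s"

definition user_act :: "nat \<Rightarrow> nat pmf \<Rightarrow> (nat \<Rightarrow> nat \<Rightarrow> real) \<Rightarrow> (nat \<Rightarrow> real) \<Rightarrow> bool \<Rightarrow> bool" where
  "user_act m lam rho sch s \<longleftrightarrow>
     (\<Sum>i<m. posterior m lam sch s i * rho i 1) \<ge> (\<Sum>i<m. posterior m lam sch s i * rho i 0)"

(* platform's expected one-round utility (= probability of action 1) *)
definition U :: "nat \<Rightarrow> nat pmf \<Rightarrow> (nat \<Rightarrow> nat \<Rightarrow> real) \<Rightarrow> (nat \<Rightarrow> real) \<Rightarrow> real" where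
  "U m lam rho sch = (\<Sum>i<m. pmf lam i * (\<Sum>s\<in>(UNIV::bool set).
       lik sch s i * (if user_act m lam rho sch s then 1 else 0)))"

definition persuasive :: "nat \<Rightarrow> nat pmf \<Rightarrow> (nat \<Rightarrow> nat \<Rightarrow> real) \<Rightarrow> (nat \<Rightarrow> real) \<Rightarrow> bool" where
  "persuasive m lam rho sch \<longleftrightarrow> (sig_prob m lam sch True > 0 \<longrightarrow> user_act m lam rho sch True)"

(* sstar is an optimal solution of the LP defining the optimal scheme in hindsight *)
definition lp_feasible :: "nat \<Rightarrow> nat pmf \<Rightarrow> (nat \<Rightarrow> nat \<Rightarrow> real) \<Rightarrow> (nat \<Rightarrow> real) \<Rightarrow> bool" where
  "lp_feasible m lam rho p \<longleftrightarrow> (\<forall>i<m. 0 \<le> p i \<and> p i \<le> 1) \<and> (\<Sum>i<m. omega lam rho i * p i) \<ge> 0"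

definition lp_optimal :: "nat \<Rightarrow> nat pmf \<Rightarrow> (nat \<Rightarrow> nat \<Rightarrow> real) \<Rightarrow> (nat \<Rightarrow> real) \<Rightarrow> bool" where
  "lp_optimal m lam rho p \<longleftrightarrow> lp_feasible m lam rho p \<and>
     (\<forall>q. lp_feasible m lam rho q \<longrightarrow> (\<Sum>i<m. pmf lam i * q i) \<le> (\<Sum>i<m. pmf lam i * p i))"

definition round_pmf :: "nat pmf \<Rightarrow> (nat \<Rightarrow> real) \<Rightarrow> (nat \<times> bool) pmf" where
  "round_pmf lam sch = bind_pmf lam (\<lambda>\<theta>. map_pmf (\<lambda>b. (\<theta>, b)) (bernoulli_pmf (sch \<theta>)))"

definition stops :: "nat \<Rightarrow> nat pmf \<Rightarrow> (nat \<Rightarrow> nat \<Rightarrow> real) \<Rightarrow> (nat \<Rightarrow> real) \<Rightarrow> nat \<times> bool \<Rightarrow> bool" where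
  "stops m lam rho sch x \<longleftrightarrow> snd x \<or> user_act m lam rho sch (snd x)"

(* expected regret of CheckPersu(sch): rounds are i.i.d.; round t is used iff no earlier round stopped;
   each used round contributes U(sstar) - U(sch) *)
definition checkpersu_regret ::
  "nat \<Rightarrow> nat pmf \<Rightarrow> (nat \<Rightarrow> nat \<Rightarrow> real) \<Rightarrow> (nat \<Rightarrow> real) \<Rightarrow> (nat \<Rightarrow> real) \<Rightarrow> ennreal" where
  "checkpersu_regret m lam rho sstar sch =
     (\<integral>\<^sup>+ xs. (\<Sum>t. if (\<forall>t'<t. \<not> stops m lam rho sch (xs !! t'))
                      then ennreal (U m lam rho sstar - U m lam rho sch) else 0)
        \<partial>stream_space (measure_pmf (round_pmf lam sch)))"

end

theory Submission
  imports Defs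
begin

(* CheckPersu stops in the first round whose outcome is not (signal 0, action 0). Rounds are i.i.d.,
   so the number of rounds it uses is geometric and its expected regret is
   (U(sstar) - U(sch)) / P(stop).  Write S = sum_i lam(i) sch(i) for the probability of signal 1.
   If the user does not act on signal 0, then P(stop) = S and U(sch) = S [user acts on signal 1],
   which gives the bound with equality.  If the user acts on signal 0, every round stops and the
   regret U(sstar) - U(sch) is 0 when the user also acts on signal 1 and at most
   U(sstar) <= U(sstar) / S otherwise. *)

lemma (in prob_space) emeasure_stream_space_prefix:
  assumes [measurable]: "A \<in> sets M"
  shows "emeasure (stream_space M) {xs \<in> space (stream_space M). \<forall>i<t. xs !! i \<in> A} = emeasure M A ^ t"
proof (induction t)
  case 0
  show ?case
    using prob_space.emeasure_space_1[OF prob_space_stream_space] by simp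
next
  case (Suc t)
  let ?S = "stream_space M"
  have shift: "{xs \<in> space ?S. x ## xs \<in> {xs \<in> space ?S. \<forall>i<Suc t. xs !! i \<in> A}}
      = (if x \<in> A then {xs \<in> space ?S. \<forall>i<t. xs !! i \<in> A} else {})" if "x \<in> space M" for x
    using that sets.sets_into_space[OF assms] by (auto simp: stream_space_Stream less_Suc_eq_0_disj)
  have "emeasure ?S {xs \<in> space ?S. \<forall>i<Suc t. xs !! i \<in> A}
      = (\<integral>\<^sup>+x. emeasure ?S {xs \<in> space ?S. x ## xs \<in> {xs \<in> space ?S. \<forall>i<Suc t. xs !! i \<in> A}} \<partial>M)"
    by (rule emeasure_stream_space) measurable
  also have "\<dots> = (\<integral>\<^sup>+x. indicator A x * emeasure M A ^ t \<partial>M)"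
    by (rule nn_integral_cong) (simp only: shift, simp add: Suc)
  also have "\<dots> = emeasure M A ^ Suc t"
    by (simp add: nn_integral_multc mult.commute)
  finally show ?case .
qed

lemma (in prob_space) suminf_emeasure_power:
  assumes "A \<in> events"
  shows "(\<Sum>t. emeasure M A ^ t) = 1 / emeasure M (space M - A)"
proof -
  let ?p = "prob A"
  have compl: "emeasure M (space M - A) = ennreal (1 - ?p)"
    using assms by (simp add: emeasure_eq_measure prob_compl)
  show ?thesis
  proof (cases "?p < 1")
    case True
    have "(\<Sum>t. emeasure M A ^ t) = (\<Sum>t. ennreal (?p ^ t))"
      by (simp add: emeasure_eq_measure ennreal_power)
    also have "\<dots> = ennreal (1 / (1 - ?p))"
      using True by (intro suminf_ennreal_eq geometric_sums) auto
    finally show ?thesis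
      using True divide_ennreal[of 1 "1 - ?p"] by (simp add: compl)
  next
    case False
    then have "?p = 1"
      using prob_le_1[of A] by linarith
    then have "emeasure M A = 1"
      by (simp add: emeasure_eq_measure)
    moreover have "(\<Sum>t::nat. ennreal 1) = top"
      using summable_suminf_not_top[of "\<lambda>_. 1::real"] by (auto simp: summable_const_iff)
    ultimately show ?thesis
      using \<open>?p = 1\<close> by (simp add: compl)
  qed
qed

lemma (in prob_space) nn_integral_stream_space_survival:
  assumes [measurable]: "A \<in> events"
  shows "(\<integral>\<^sup>+xs. (\<Sum>t. indicator {xs \<in> space (stream_space M). \<forall>i<t. xs !! i \<in> A} xs) \<partial>stream_space M)
    = 1 / emeasure M (space M - A)"
proof -
  have survive: "{xs \<in> space (stream_space M). \<forall>i<t. xs !! i \<in> A} \<in> sets (stream_space M)" for t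
    by measurable
  have "(\<integral>\<^sup>+xs. (\<Sum>t. indicator {xs \<in> space (stream_space M). \<forall>i<t. xs !! i \<in> A} xs) \<partial>stream_space M)
      = (\<Sum>t. emeasure (stream_space M) {xs \<in> space (stream_space M). \<forall>i<t. xs !! i \<in> A})"
    using survive by (simp add: nn_integral_suminf)
  also have "\<dots> = 1 / emeasure M (space M - A)"
    by (simp only: emeasure_stream_space_prefix[OF assms] suminf_emeasure_power[OF assms])
  finally show ?thesis .
qed

lemma checkpersu_regret_eq:
  "checkpersu_regret m lam rho sstar sch
    = ennreal (U m lam rho sstar - U m lam rho sch) / emeasure (round_pmf lam sch) {x. stops m lam rho sch x}"
proof -
  let ?M = "measure_pmf (round_pmf lam sch)"
  let ?c = "ennreal (U m lam rho sstar - U m lam rho sch)"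
  let ?survive = "\<lambda>t. {xs \<in> space (stream_space ?M). \<forall>i<t. xs !! i \<in> {x. \<not> stops m lam rho sch x}}"
  have survive: "?survive t \<in> sets (stream_space ?M)" for t
    by measurable
  have stop_set: "space ?M - {x. \<not> stops m lam rho sch x} = {x. stops m lam rho sch x}"
    by auto
  have round: "(if \<forall>i<t. \<not> stops m lam rho sch (xs !! i) then ?c else 0) = ?c * indicator (?survive t) xs"
    for t xs
    by (simp add: indicator_def space_stream_space)
  have "checkpersu_regret m lam rho sstar sch = (\<integral>\<^sup>+xs. ?c * (\<Sum>t. indicator (?survive t) xs) \<partial>stream_space ?M)"
    unfolding checkpersu_regret_def round ennreal_suminf_cmult ..
  also have "\<dots> = ?c * (\<integral>\<^sup>+xs. (\<Sum>t. indicator (?survive t) xs) \<partial>stream_space ?M)"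
    using survive by (intro nn_integral_cmult borel_measurable_suminf_order borel_measurable_indicator)
  also have "\<dots> = ?c * (1 / emeasure ?M {x. stops m lam rho sch x})"
    by (simp only: measure_pmf.nn_integral_stream_space_survival sets_measure_pmf UNIV_I stop_set)
  finally show ?thesis
    by (simp add: ennreal_times_divide)
qed

lemma sum_pmf_mult_bounds:
  fixes lam :: "nat pmf"
  assumes supp: "set_pmf lam \<subseteq> {..<m}" and range: "\<forall>i<m. 0 \<le> p i \<and> p i \<le> 1"
  shows "0 \<le> (\<Sum>i<m. pmf lam i * p i)" and "(\<Sum>i<m. pmf lam i * p i) \<le> 1"
proof -
  show "0 \<le> (\<Sum>i<m. pmf lam i * p i)"
    using range by (intro sum_nonneg) auto
  have "(\<Sum>i<m. pmf lam i * p i) \<le> (\<Sum>i<m. pmf lam i)"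
    using range by (intro sum_mono) (auto intro: mult_left_le)
  also have "\<dots> = 1"
    using sum_pmf_eq_1[OF _ supp] by simp
  finally show "(\<Sum>i<m. pmf lam i * p i) \<le> 1" .
qed

lemma sig_prob_True: "sig_prob m lam p True = (\<Sum>i<m. pmf lam i * p i)"
  by (simp add: sig_prob_def lik_def)

lemma sig_prob_False:
  assumes "set_pmf lam \<subseteq> {..<m}"
  shows "sig_prob m lam p False = 1 - (\<Sum>i<m. pmf lam i * p i)"
  using sum_pmf_eq_1[OF _ assms]
  by (simp add: sig_prob_def lik_def right_diff_distrib sum_subtractf)

lemma U_eq_sig_prob:
  "U m lam rho p = sig_prob m lam p True * (if user_act m lam rho p True then 1 else 0)
     + sig_prob m lam p False * (if user_act m lam rho p False then 1 else 0)"
  unfolding U_def sig_prob_def UNIV_bool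
  by (simp add: sum.distrib sum_distrib_right algebra_simps)

lemma U_bounds:
  assumes "set_pmf lam \<subseteq> {..<m}" and "\<forall>i<m. 0 \<le> p i \<and> p i \<le> 1"
  shows "0 \<le> U m lam rho p" and "U m lam rho p \<le> 1"
  using sum_pmf_mult_bounds[OF assms]
  by (simp_all add: U_eq_sig_prob sig_prob_True sig_prob_False[OF assms(1)])

lemma emeasure_round_pmf_signal:
  assumes supp: "set_pmf lam \<subseteq> {..<m}" and range: "\<forall>i<m. 0 \<le> p i \<and> p i \<le> 1"
  shows "emeasure (round_pmf lam p) {x. snd x} = ennreal (\<Sum>i<m. pmf lam i * p i)"
proof -
  have signal: "{b. b} = {True}"
    by auto
  have "emeasure (round_pmf lam p) {x. snd x} = (\<integral>\<^sup>+i. ennreal (p i) \<partial>lam)"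
    unfolding round_pmf_def using supp range
    by (auto simp: signal emeasure_pmf_single intro!: nn_integral_cong_AE AE_pmfI)
  also have "\<dots> = (\<Sum>i<m. ennreal (p i) * pmf lam i)"
    using supp by (intro nn_integral_measure_pmf_support) auto
  also have "\<dots> = ennreal (\<Sum>i<m. pmf lam i * p i)"
    using range by (subst sum_ennreal[symmetric]) (auto simp: ennreal_mult'' mult.commute)
  finally show ?thesis .
qed

lemma emeasure_round_pmf_stops:
  assumes supp: "set_pmf lam \<subseteq> {..<m}" and range: "\<forall>i<m. 0 \<le> p i \<and> p i \<le> 1"
  shows "emeasure (round_pmf lam p) {x. stops m lam rho p x}
    = (if user_act m lam rho p False then 1 else ennreal (\<Sum>i<m. pmf lam i * p i))"
proof (cases "user_act m lam rho p False")
  case True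
  then have "stops m lam rho p x" for x
    unfolding stops_def by (cases "snd x") auto
  then show ?thesis
    using True measure_pmf.emeasure_space_1[of "round_pmf lam p"] by simp
next
  case False
  then have "stops m lam rho p x \<longleftrightarrow> snd x" for x
    unfolding stops_def by (cases "snd x") auto
  then show ?thesis
    using False emeasure_round_pmf_signal[OF supp range] by simp
qed

lemma checkpersu_regret_eq_signal:
  fixes lam :: "nat pmf"
  assumes supp: "set_pmf lam \<subseteq> {..<m}" and range: "\<forall>i<m. 0 \<le> sch i \<and> sch i \<le> 1"
  shows "checkpersu_regret m lam rho sstar sch
    = (if user_act m lam rho sch False then ennreal (U m lam rho sstar - U m lam rho sch)
       else ennreal (U m lam rho sstar - U m lam rho sch) / ennreal (\<Sum>i<m. pmf lam i * sch i))"
  unfolding checkpersu_regret_eq emeasure_round_pmf_stops[OF supp range]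
  by (simp add: divide_ennreal_def)

lemma checkpersu_regret_le_of_signal_pos:
  fixes lam :: "nat pmf"
  assumes supp: "set_pmf lam \<subseteq> {..<m}"
    and sstar_range: "\<forall>i<m. 0 \<le> sstar i \<and> sstar i \<le> 1"
    and sch_range: "\<forall>i<m. 0 \<le> sch i \<and> sch i \<le> 1"
    and signal: "0 < (\<Sum>i<m. pmf lam i * sch i)"
  shows "checkpersu_regret m lam rho sstar sch \<le>
           ennreal (U m lam rho sstar) / ennreal (\<Sum>i<m. pmf lam i * sch i)
           - (if persuasive m lam rho sch then 1 else 0)"
proof -
  define S where "S = (\<Sum>i<m. pmf lam i * sch i)"
  define u where "u = U m lam rho sstar"
  define a0 where "a0 = user_act m lam rho sch False"
  define a1 where "a1 = user_act m lam rho sch True"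
  have S: "0 < S" "S \<le> 1"
    unfolding S_def using signal sum_pmf_mult_bounds[OF supp sch_range] by auto
  have u: "0 \<le> u" "u \<le> 1"
    unfolding u_def using U_bounds[OF supp sstar_range] by auto
  have U_sch: "U m lam rho sch = S * (if a1 then 1 else 0) + (1 - S) * (if a0 then 1 else 0)"
    unfolding U_eq_sig_prob sig_prob_True sig_prob_False[OF supp] S_def a0_def a1_def ..
  have regret: "checkpersu_regret m lam rho sstar sch
      = (if a0 then ennreal (u - U m lam rho sch) else ennreal (u - U m lam rho sch) / ennreal S)"
    unfolding checkpersu_regret_eq_signal[OF supp sch_range] S_def u_def a0_def ..
  have persuasive: "persuasive m lam rho sch \<longleftrightarrow> a1"
    unfolding persuasive_def a1_def sig_prob_True using signal by simp
  have frac: "ennreal r / ennreal S = ennreal (r / S)" for r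
    using S(1) by (cases "0 \<le> r") (simp_all add: divide_ennreal ennreal_neg divide_nonpos_pos)
  note simplify = regret U_sch persuasive u_def[symmetric] S_def[symmetric]
  consider (act_always) a0 a1 | (act_on_no_signal) a0 "\<not> a1" | (obedient) "\<not> a0" a1 | (act_never) "\<not> a0" "\<not> a1"
    by blast
  then show ?thesis
  proof cases
    case act_always
    then show ?thesis
      unfolding simplify using u by (simp add: ennreal_neg)
  next
    case act_on_no_signal
    have "u \<le> u / S"
      using S u by (simp add: le_divide_eq mult_left_le)
    with act_on_no_signal show ?thesis
      unfolding simplify using S by (simp add: frac ennreal_leI)
  next
    case obedient
    then show ?thesis
      unfolding simplify using S ennreal_minus[of 1 "u / S"] by (simp add: frac diff_divide_distrib)
  next
    case act_never
    then show ?thesis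
      unfolding simplify by (simp add: frac)
  qed
qed

lemma checkpersu_regret_le:
  fixes lam :: "nat pmf"
  assumes supp: "set_pmf lam \<subseteq> {..<m}"
    and sstar_range: "\<forall>i<m. 0 \<le> sstar i \<and> sstar i \<le> 1"
    and sch_range: "\<forall>i<m. 0 \<le> sch i \<and> sch i \<le> 1"
  shows "checkpersu_regret m lam rho sstar sch \<le>
           ennreal (U m lam rho sstar) / ennreal (\<Sum>i<m. pmf lam i * sch i)
           - (if persuasive m lam rho sch then 1 else 0)"
proof -
  have "0 \<le> (\<Sum>i<m. pmf lam i * sch i)" "0 \<le> U m lam rho sstar"
    using sum_pmf_mult_bounds(1)[OF supp sch_range] U_bounds(1)[OF supp sstar_range] .
  \<comment> \<open>Without signal 1 the bound is U(sstar) / 0, which in ennreal is top unless U(sstar) = 0.\<close>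
  then consider (signal) "0 < (\<Sum>i<m. pmf lam i * sch i)"
    | (silent_worthless) "(\<Sum>i<m. pmf lam i * sch i) = 0" "U m lam rho sstar = 0"
    | (silent) "(\<Sum>i<m. pmf lam i * sch i) = 0" "0 < U m lam rho sstar"
    by linarith
  then show ?thesis
  proof cases
    case signal
    then show ?thesis
      using checkpersu_regret_le_of_signal_pos[OF supp sstar_range sch_range] by blast
  next
    case silent_worthless
    then have "U m lam rho sstar - U m lam rho sch \<le> 0"
      using U_bounds(1)[OF supp sch_range] by simp
    then show ?thesis
      unfolding checkpersu_regret_eq_signal[OF supp sch_range] by (simp add: ennreal_neg)
  qed simp
qed

theorem mainTheorem5:
  fixes m :: nat and lam :: "nat pmf" and rho :: "nat \<Rightarrow> nat \<Rightarrow> real"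
    and sstar sch :: "nat \<Rightarrow> real"
  assumes supp: "set_pmf lam \<subseteq> {..<m}"
    and pos: "\<exists>i<m. omega lam rho i > 0"
    and neg: "(\<Sum>i<m. omega lam rho i) < 0"
    and opt: "lp_optimal m lam rho sstar"
    and pi_range: "\<forall>i<m. 0 \<le> sch i \<and> sch i \<le> 1"
  shows "checkpersu_regret m lam rho sstar sch \<le>
           ennreal (U m lam rho sstar) / ennreal (\<Sum>i<m. pmf lam i * sch i)
           - (if persuasive m lam rho sch then 1 else 0)"
proof -
  have "\<forall>i<m. 0 \<le> sstar i \<and> sstar i \<le> 1"
    using opt unfolding lp_optimal_def lp_feasible_def by blast
  then show ?thesis
    using checkpersu_regret_le[OF supp _ pi_range] by blast
qed

end
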